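(* In the limited-feedback setting of the context, for a given transmission rate $R_1>0$, the optimal throughput $\gamma^*$ satisfies $\gamma_L\le\gamma^*\le\gamma_U$, where $$\gamma_L=\frac{(1-\tau)R_1}{(1-\tau)+\tau\left(1+\frac{1}{p_s}\right)e^{R_1/E[R^{(2)}]}},\qquad \gamma_U=\frac{R_1}{1+\frac{\tau}{p_s}}.$$
   Context: Setting (distributed opportunistic scheduling with two-level probing and $(0,1,e)$ feedback). Fix $p_s\in(0,1)$, $\tau\in(0,1)$, data transmission duration normalized to $1$, and a fixed transmission rate $R_1>0$ known to the transmitter. Let $K_1,K_2,\dots$ be i.i.d. geometric on $\{1,2,\dots\}$ with parameter $p_s$. Let $(R_n^{(1)},R_n^{(2)})$, $n\ge1$, be i.i.d. pairs independent of $(K_j)$, with $R_n^{(1)}$ exponential with mean $E[R^{(1)}]>0$, and conditionally on $R_n^{(1)}=x$, $R_n^{(2)}$ distributed as $|\sqrt{c_rx}+z|^2$ with constants $c_r>0$, $R_e>0$ and $z$ circularly symmetric complex Gaussian with $E|z|^2=R_e$; $R_n^{(2)}$ is then exponential with mean $E[R^{(2)}]=c_rE[R^{(1)}]+R_e$. In round $n$ (reached after contention time $\sum_{j\le n}K_j\tau$) the receiver of the successful link observes $R_n^{(1)}$ and feeds back "1" (transmit at rate $R_1$ for duration $1$, which yields reward $R_1$ if $R_n^{(1)}\ge R_1$ and $0$ otherwise), "0" (defer, all links re-contend, go to round $n+1$), or "e" (perform second-level probing at time cost $\tau$, observe $R_n^{(2)}$, then feed back "1" = transmit at rate $R_1$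 for duration $1-\tau$, yielding reward $R_1$ per unit time if $R_n^{(2)}\ge R_1$ and $0$ otherwise, or "0" = defer and re-contend). With $N$ the round of transmission, $R_N$ the achieved rate, $T_{d,N}\in\{1,1-\tau\}$ the transmission duration and $T_N$ the total elapsed time (contention times, second-level probing times, and final transmission period of total length 1), the optimal throughput for the given $R_1$ is $\gamma^*=\sup_N E[R_NT_{d,N}]/E[T_N]$ over stopping rules with $N\ge1$, $E[T_N]<\infty$. *)

theory Defs
  imports "HOL-Probability.Probability"
begin

text \<open>Per-round primitive randomness: (K - 1, R1, Re0(z), Im(z)), where K - 1 is geometric on
  {0,1,...} with success probability ps (so K is geometric on {1,2,...}), R1 is exponential
  with mean m1, and z = zr + i zi is circularly symmetric complex Gaussian with E|z|^2 = Re0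
  (zr, zi i.i.d. N(0, Re0/2)).\<close>

type_synonym obs = "nat \<times> real \<times> real \<times> real"

definition round_dist :: "real \<Rightarrow> real \<Rightarrow> real \<Rightarrow> obs measure" where
  "round_dist ps m1 Re0 =
     measure_pmf (geometric_pmf ps) \<Otimes>\<^sub>M
       (density lborel (exponential_density (1 / m1)) \<Otimes>\<^sub>M
         (density lborel (normal_density 0 (sqrt (Re0 / 2))) \<Otimes>\<^sub>M
          density lborel (normal_density 0 (sqrt (Re0 / 2)))))"

text \<open>The whole sample space: i.i.d. rounds indexed by n = 0,1,2,... (round n+1 of the paper).\<close>
definition sample_space :: "real \<Rightarrow> real \<Rightarrow> real \<Rightarrow> (nat \<Rightarrow> obs) measure" where
  "sample_space ps m1 Re0 = PiM UNIV (\<lambda>_. round_dist ps m1 Re0)"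

definition Kof :: "(nat \<Rightarrow> obs) \<Rightarrow> nat \<Rightarrow> nat" where
  "Kof \<omega> n = fst (\<omega> n) + 1"

definition R1of :: "(nat \<Rightarrow> obs) \<Rightarrow> nat \<Rightarrow> real" where
  "R1of \<omega> n = fst (snd (\<omega> n))"

definition R2of :: "real \<Rightarrow> (nat \<Rightarrow> obs) \<Rightarrow> nat \<Rightarrow> real" where
  "R2of cr \<omega> n = (sqrt (cr * R1of \<omega> n) + fst (snd (snd (\<omega> n))))\<^sup>2 + (snd (snd (snd (\<omega> n))))\<^sup>2"

text \<open>First-level feedback: 1 = Transmit, 0 = Defer, e = Probe.\<close>
datatype dec = Transmit | Defer | Probe

text \<open>Observed history of past rounds: contention duration K_j, R1_j, and R2_j if it was probed.\<close>
type_synonym hist = "(nat \<times> real \<times> real option) list"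

text \<open>A (deterministic, non-anticipating) stopping rule: the first-level decision depends on the
  past history and the current (K, R1); after probing, the second-level decision (True = transmit,
  False = defer) depends additionally on the current R2.\<close>
type_synonym policy = "(hist \<Rightarrow> nat \<times> real \<Rightarrow> dec) \<times> (hist \<Rightarrow> nat \<times> real \<times> real \<Rightarrow> bool)"

fun hist_of :: "real \<Rightarrow> policy \<Rightarrow> (nat \<Rightarrow> obs) \<Rightarrow> nat \<Rightarrow> hist" where
  "hist_of cr P \<omega> 0 = []"
| "hist_of cr P \<omega> (Suc m) = hist_of cr P \<omega> m @
     [(Kof \<omega> m, R1of \<omega> m,
       if fst P (hist_of cr P \<omega> m) (Kof \<omega> m, R1of \<omega> m) = Probe then Some (R2of cr \<omega> m) else None)]"

definition dec1 :: "real \<Rightarrow> policy \<Rightarrow> (nat \<Rightarrow> obs) \<Rightarrow> nat \<Rightarrow> dec" where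
  "dec1 cr P \<omega> m = fst P (hist_of cr P \<omega> m) (Kof \<omega> m, R1of \<omega> m)"

definition stops :: "real \<Rightarrow> policy \<Rightarrow> (nat \<Rightarrow> obs) \<Rightarrow> nat \<Rightarrow> bool" where
  "stops cr P \<omega> m \<longleftrightarrow> dec1 cr P \<omega> m = Transmit \<or>
     (dec1 cr P \<omega> m = Probe \<and> snd P (hist_of cr P \<omega> m) (Kof \<omega> m, R1of \<omega> m, R2of cr \<omega> m))"

text \<open>Transmission round N (0-indexed).\<close>
definition stop_round :: "real \<Rightarrow> policy \<Rightarrow> (nat \<Rightarrow> obs) \<Rightarrow> nat" where
  "stop_round cr P \<omega> = (LEAST m. stops cr P \<omega> m)"

text \<open>T_N: contention times of rounds 1..N, second-level probing times in rounds before N,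
  and the final period of total length 1 (probing plus transmission if probed in round N).\<close>
definition total_time :: "real \<Rightarrow> real \<Rightarrow> policy \<Rightarrow> (nat \<Rightarrow> obs) \<Rightarrow> real" where
  "total_time tau cr P \<omega> =
     (let N = stop_round cr P \<omega> in
      (\<Sum>j\<le>N. real (Kof \<omega> j) * tau) + tau * real (card {j. j < N \<and> dec1 cr P \<omega> j = Probe}) + 1)"

definition reward :: "real \<Rightarrow> real \<Rightarrow> real \<Rightarrow> policy \<Rightarrow> (nat \<Rightarrow> obs) \<Rightarrow> real" where
  "reward R1 tau cr P \<omega> =
     (let N = stop_round cr P \<omega> in
      if dec1 cr P \<omega> N = Transmit then (if R1of \<omega> N \<ge> R1 then R1 else 0)
      else (if R2of cr \<omega> N \<ge> R1 then R1 * (1 - tau) else 0))"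

definition admissible :: "real \<Rightarrow> real \<Rightarrow> real \<Rightarrow> real \<Rightarrow> real \<Rightarrow> real \<Rightarrow> policy \<Rightarrow> bool" where
  "admissible ps tau R1 m1 cr Re0 P \<longleftrightarrow>
     (AE \<omega> in sample_space ps m1 Re0. \<exists>m. stops cr P \<omega> m) \<and>
     total_time tau cr P \<in> borel_measurable (sample_space ps m1 Re0) \<and>
     reward R1 tau cr P \<in> borel_measurable (sample_space ps m1 Re0) \<and>
     integrable (sample_space ps m1 Re0) (total_time tau cr P)"

definition opt_throughput :: "real \<Rightarrow> real \<Rightarrow> real \<Rightarrow> real \<Rightarrow> real \<Rightarrow> real \<Rightarrow> real" where
  "opt_throughput ps tau R1 m1 cr Re0 =
     Sup {(\<integral>\<omega>. reward R1 tau cr P \<omega> \<partial>sample_space ps m1 Re0) /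
          (\<integral>\<omega>. total_time tau cr P \<omega> \<partial>sample_space ps m1 Re0) | P. admissible ps tau R1 m1 cr Re0 P}"

end

theory Submission
  imports Defs "HOL-Real_Asymp.Real_Asymp"
begin

text \<open>Every policy earns at most \<open>R1\<close> and spends at least the first contention period, of mean
  \<open>\<tau> / p\<^sub>s\<close>, plus the final period of length one; this gives \<open>\<gamma>\<^sub>U\<close>. For \<open>\<gamma>\<^sub>L\<close> take
  the policy that always probes and transmits iff \<open>R2 \<ge> R1\<close>. Writing \<open>R1 = |X|\<^sup>2 / c\<^sub>r\<close> with
  \<open>X\<close> a planar Gaussian, rotation invariance of \<open>z\<close> shows that \<open>R2 = |\<surd>(c\<^sub>r R1) + z|\<^sup>2\<close>
  has the law of \<open>|X + z|\<^sup>2\<close>, the squared modulus of a planar Gaussian. So \<open>R2\<close> is exponential,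
  and each round is good with probability \<open>q \<ge> exp (- R1 / E R2)\<close>, independently of the others.
  Every transmission then earns \<open>(1 - \<tau>) R1\<close>, and summing the expected contention and probing
  times over the geometrically many rounds gives \<open>E T = (1 - \<tau>) + \<tau> (1 + 1 / p\<^sub>s) / q\<close>.\<close>

section \<open>Rotation invariance of Lebesgue measure on the plane\<close>

lemma nn_integral_plane_shear_fst:
  fixes f :: "real \<times> real \<Rightarrow> ennreal"
  assumes [measurable]: "f \<in> borel_measurable (lborel \<Otimes>\<^sub>M lborel)"
  shows "(\<integral>\<^sup>+ p. f (fst p + k * snd p, snd p) \<partial>(lborel \<Otimes>\<^sub>M lborel)) = (\<integral>\<^sup>+ p. f p \<partial>(lborel \<Otimes>\<^sub>M lborel))"
proof -
  have "(\<integral>\<^sup>+ p. f (fst p + k * snd p, snd p) \<partial>(lborel \<Otimes>\<^sub>M lborel))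
      = (\<integral>\<^sup>+ b. \<integral>\<^sup>+ a. f (a + k * b, b) \<partial>lborel \<partial>lborel)"
    by (subst lborel_pair.nn_integral_snd[symmetric]) auto
  also have "\<dots> = (\<integral>\<^sup>+ b. \<integral>\<^sup>+ a. f (a, b) \<partial>lborel \<partial>lborel)"
  proof (rule nn_integral_cong)
    fix b :: real
    show "(\<integral>\<^sup>+ a. f (a + k * b, b) \<partial>lborel) = (\<integral>\<^sup>+ a. f (a, b) \<partial>lborel)"
      using nn_integral_real_affine[of "\<lambda>a. f (a, b)" 1 "k * b"] by (simp add: add.commute)
  qed
  also have "\<dots> = (\<integral>\<^sup>+ p. f p \<partial>(lborel \<Otimes>\<^sub>M lborel))"
    by (subst lborel_pair.nn_integral_snd) auto
  finally show ?thesis .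
qed

lemma nn_integral_plane_shear_snd:
  fixes f :: "real \<times> real \<Rightarrow> ennreal"
  assumes [measurable]: "f \<in> borel_measurable (lborel \<Otimes>\<^sub>M lborel)"
  shows "(\<integral>\<^sup>+ p. f (fst p, snd p + k * fst p) \<partial>(lborel \<Otimes>\<^sub>M lborel)) = (\<integral>\<^sup>+ p. f p \<partial>(lborel \<Otimes>\<^sub>M lborel))"
proof -
  have "(\<integral>\<^sup>+ p. f (fst p, snd p + k * fst p) \<partial>(lborel \<Otimes>\<^sub>M lborel))
      = (\<integral>\<^sup>+ a. \<integral>\<^sup>+ b. f (a, b + k * a) \<partial>lborel \<partial>lborel)"
    by (subst lborel.nn_integral_fst[symmetric]) auto
  also have "\<dots> = (\<integral>\<^sup>+ a. \<integral>\<^sup>+ b. f (a, b) \<partial>lborel \<partial>lborel)"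
  proof (rule nn_integral_cong)
    fix a :: real
    show "(\<integral>\<^sup>+ b. f (a, b + k * a) \<partial>lborel) = (\<integral>\<^sup>+ b. f (a, b) \<partial>lborel)"
      using nn_integral_real_affine[of "\<lambda>b. f (a, b)" 1 "k * a"] by (simp add: add.commute)
  qed
  also have "\<dots> = (\<integral>\<^sup>+ p. f p \<partial>(lborel \<Otimes>\<^sub>M lborel))"
    by (subst lborel.nn_integral_fst) auto
  finally show ?thesis .
qed

definition plane_rotation :: "real \<Rightarrow> real \<Rightarrow> real \<times> real \<Rightarrow> real \<times> real" where
  "plane_rotation c s p = (c * fst p - s * snd p, s * fst p + c * snd p)"

lemma plane_rotation_measurable[measurable]:
  "plane_rotation c s \<in> borel \<Otimes>\<^sub>M borel \<rightarrow>\<^sub>M borel \<Otimes>\<^sub>M borel"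
  unfolding plane_rotation_def by measurable

lemma plane_rotation_norm:
  assumes "c\<^sup>2 + s\<^sup>2 = 1"
  shows "(fst (plane_rotation c s p))\<^sup>2 + (snd (plane_rotation c s p))\<^sup>2 = (fst p)\<^sup>2 + (snd p)\<^sup>2"
proof -
  have "(fst (plane_rotation c s p))\<^sup>2 + (snd (plane_rotation c s p))\<^sup>2
      = (c\<^sup>2 + s\<^sup>2) * ((fst p)\<^sup>2 + (snd p)\<^sup>2)"
    unfolding plane_rotation_def by (simp add: power2_eq_square algebra_simps)
  with assms show ?thesis by simp
qed

text \<open>A rotation by an angle other than \<open>\<pi>\<close> is a product of three shears:
  with \<open>t = s / (1 + c)\<close> (the tangent of half the angle) it is
  \<open>(x, y) \<mapsto> (x - t y, y) \<mapsto> (x, y + s x) \<mapsto> (x - t y, y)\<close>.\<close>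

lemma nn_integral_plane_rotation_shears:
  fixes f :: "real \<times> real \<Rightarrow> ennreal"
  assumes [measurable]: "f \<in> borel_measurable (lborel \<Otimes>\<^sub>M lborel)"
    and cs: "c\<^sup>2 + s\<^sup>2 = 1" and c: "c \<noteq> -1"
  shows "(\<integral>\<^sup>+ p. f (plane_rotation c s p) \<partial>(lborel \<Otimes>\<^sub>M lborel)) = (\<integral>\<^sup>+ p. f p \<partial>(lborel \<Otimes>\<^sub>M lborel))"
proof -
  have "c\<^sup>2 \<le> 1" using cs zero_le_power2[of s] by linarith
  then have "\<bar>c\<bar> \<le> 1" by (simp add: abs_square_le_1)
  with c have c1: "1 + c > 0" by simp
  define t where "t = s / (1 + c)"
  have ts: "t * (1 + c) = s" using c1 by (simp add: t_def)
  have "s * t * (1 + c) = (1 - c) * (1 + c)"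
    using ts cs by (simp add: power2_eq_square algebra_simps)
  then have st: "1 - s * t = c" using c1 by simp
  define g where "g = (\<lambda>p. f (fst p + (-t) * snd p, snd p))"
  define h where "h = (\<lambda>p. g (fst p, snd p + s * fst p))"
  have [measurable]: "g \<in> borel_measurable (lborel \<Otimes>\<^sub>M lborel)" "h \<in> borel_measurable (lborel \<Otimes>\<^sub>M lborel)"
    unfolding g_def h_def by measurable
  have "f (plane_rotation c s p) = h (fst p + (-t) * snd p, snd p)" for p
  proof -
    have "x - t * y - t * (y + s * (x - t * y)) = (1 - s * t) * x - t * (1 + (1 - s * t)) * y"
      "y + s * (x - t * y) = s * x + (1 - s * t) * y" for x y
      by (simp_all add: algebra_simps)
    then show ?thesis
      unfolding h_def g_def plane_rotation_def st ts by simp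
  qed
  then have "(\<integral>\<^sup>+ p. f (plane_rotation c s p) \<partial>(lborel \<Otimes>\<^sub>M lborel))
      = (\<integral>\<^sup>+ p. h (fst p + (-t) * snd p, snd p) \<partial>(lborel \<Otimes>\<^sub>M lborel))"
    by simp
  also have "\<dots> = (\<integral>\<^sup>+ p. h p \<partial>(lborel \<Otimes>\<^sub>M lborel))"
    by (rule nn_integral_plane_shear_fst) measurable
  also have "\<dots> = (\<integral>\<^sup>+ p. g p \<partial>(lborel \<Otimes>\<^sub>M lborel))"
    unfolding h_def by (rule nn_integral_plane_shear_snd) measurable
  also have "\<dots> = (\<integral>\<^sup>+ p. f p \<partial>(lborel \<Otimes>\<^sub>M lborel))"
    unfolding g_def by (rule nn_integral_plane_shear_fst) measurable
  finally show ?thesis .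
qed

lemma nn_integral_plane_rotation:
  fixes f :: "real \<times> real \<Rightarrow> ennreal"
  assumes [measurable]: "f \<in> borel_measurable (lborel \<Otimes>\<^sub>M lborel)" and cs: "c\<^sup>2 + s\<^sup>2 = 1"
  shows "(\<integral>\<^sup>+ p. f (plane_rotation c s p) \<partial>(lborel \<Otimes>\<^sub>M lborel)) = (\<integral>\<^sup>+ p. f p \<partial>(lborel \<Otimes>\<^sub>M lborel))"
proof (cases "c = -1")
  case True
  with cs have "s = 0" by simp
  \<comment> \<open>The half-turn is the square of the quarter-turn.\<close>
  with True have "plane_rotation c s = plane_rotation 0 1 \<circ> plane_rotation 0 1"
    by (auto simp: plane_rotation_def)
  then show ?thesis
    using nn_integral_plane_rotation_shears[of "\<lambda>p. f (plane_rotation 0 1 p)" 0 1]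
      nn_integral_plane_rotation_shears[of f 0 1]
    by simp
qed (use nn_integral_plane_rotation_shears[OF assms] in simp)

section \<open>The Gaussian integral outside a disc\<close>

lemma nn_integral_lborel_even:
  fixes h :: "real \<Rightarrow> ennreal"
  assumes [measurable]: "h \<in> borel_measurable borel" and even: "\<And>x. h (- x) = h x"
  shows "(\<integral>\<^sup>+ x. h x \<partial>lborel) = 2 * (\<integral>\<^sup>+ x. h x * indicator {0<..} x \<partial>lborel)"
proof -
  have "(\<integral>\<^sup>+ x. h x \<partial>lborel) = (\<integral>\<^sup>+ x. h x * indicator {0<..} x + h x * indicator {..<0} x \<partial>lborel)"
    by (intro nn_integral_cong_AE AE_I[where N="{0}"]) (auto split: split_indicator)
  also have "\<dots> = (\<integral>\<^sup>+ x. h x * indicator {0<..} x \<partial>lborel) + (\<integral>\<^sup>+ x. h x * indicator {..<0} x \<partial>lborel)"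
    by (rule nn_integral_add) auto
  also have "(\<integral>\<^sup>+ x. h x * indicator {..<0} x \<partial>lborel) = (\<integral>\<^sup>+ x. h (- x) * indicator {..<0} (- x) \<partial>lborel)"
    using nn_integral_real_affine[of "\<lambda>x. h x * indicator {..<0} x" "-1" 0] by simp
  also have "\<dots> = (\<integral>\<^sup>+ x. h x * indicator {0<..} x \<partial>lborel)"
    by (intro nn_integral_cong) (auto simp: even split: split_indicator)
  finally show ?thesis by (simp add: mult_2)
qed

lemma nn_integral_plane_even:
  fixes g :: "real \<times> real \<Rightarrow> ennreal"
  assumes [measurable]: "g \<in> borel_measurable (lborel \<Otimes>\<^sub>M lborel)"
    and even_fst: "\<And>a b. g (- a, b) = g (a, b)" and even_snd: "\<And>a b. g (a, - b) = g (a, b)"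
  shows "(\<integral>\<^sup>+ p. g p \<partial>(lborel \<Otimes>\<^sub>M lborel))
       = 4 * (\<integral>\<^sup>+ a. \<integral>\<^sup>+ b. g (a, b) * indicator {0<..} b * indicator {0<..} a \<partial>lborel \<partial>lborel)"
proof -
  have "(\<integral>\<^sup>+ p. g p \<partial>(lborel \<Otimes>\<^sub>M lborel)) = (\<integral>\<^sup>+ a. \<integral>\<^sup>+ b. g (a, b) \<partial>lborel \<partial>lborel)"
    by (subst lborel.nn_integral_fst) auto
  also have "\<dots> = (\<integral>\<^sup>+ a. 2 * \<integral>\<^sup>+ b. g (a, b) * indicator {0<..} b \<partial>lborel \<partial>lborel)"
    by (intro nn_integral_cong nn_integral_lborel_even) (auto simp: even_snd)
  also have "\<dots> = 2 * (\<integral>\<^sup>+ a. \<integral>\<^sup>+ b. g (a, b) * indicator {0<..} b \<partial>lborel \<partial>lborel)"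
    by (rule nn_integral_cmult) measurable
  also have "(\<integral>\<^sup>+ a. \<integral>\<^sup>+ b. g (a, b) * indicator {0<..} b \<partial>lborel \<partial>lborel)
     = 2 * (\<integral>\<^sup>+ a. (\<integral>\<^sup>+ b. g (a, b) * indicator {0<..} b \<partial>lborel) * indicator {0<..} a \<partial>lborel)"
    by (rule nn_integral_lborel_even) (auto simp: even_fst)
  also have "(\<integral>\<^sup>+ a. (\<integral>\<^sup>+ b. g (a, b) * indicator {0<..} b \<partial>lborel) * indicator {0<..} a \<partial>lborel)
     = (\<integral>\<^sup>+ a. \<integral>\<^sup>+ b. g (a, b) * indicator {0<..} b * indicator {0<..} a \<partial>lborel \<partial>lborel)"
    by (intro nn_integral_cong) (simp add: nn_integral_multc)
  finally show ?thesis by (simp add: mult.assoc[symmetric])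
qed

lemma nn_integral_inverse_1_plus_square_pos:
  "(\<integral>\<^sup>+ u. ennreal (1 / (1 + u\<^sup>2)) * indicator {0<..} u \<partial>lborel) = ennreal (pi / 2)"
proof -
  have "(\<integral>\<^sup>+ u. ennreal (1 / (1 + u\<^sup>2)) * indicator {0<..} u \<partial>lborel)
      = (\<integral>\<^sup>+ u. ennreal (1 / (1 + u\<^sup>2)) * indicator {0..} u \<partial>lborel)"
    by (intro nn_integral_cong_AE AE_I[where N="{0}"]) (auto split: split_indicator)
  also have "\<dots> = ennreal (pi / 2 - arctan 0)"
    using tendsto_arctan_at_top
    by (intro nn_integral_FTC_atLeast)
       (auto intro!: derivative_eq_intros simp: add_nonneg_eq_0_iff field_simps power2_eq_square)
  finally show ?thesis by simp
qed

lemma nn_integral_gaussian_moment_tail: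
  fixes w v r :: real
  assumes w: "w > 0" and v: "v > 0" and r: "r \<ge> 0"
  shows "(\<integral>\<^sup>+ a. ennreal (a * exp (- (a\<^sup>2 * w) / v)) * indicator {r<..} a \<partial>lborel)
     = ennreal (v / (2 * w) * exp (- (r\<^sup>2 * w) / v))"
proof -
  let ?F = "\<lambda>a. - (v / (2 * w)) * exp (- (a\<^sup>2 * w) / v)"
  have lim: "(?F \<longlongrightarrow> 0) at_top"
    using w v by real_asymp
  have "(\<integral>\<^sup>+ a. ennreal (a * exp (- (a\<^sup>2 * w) / v)) * indicator {r<..} a \<partial>lborel)
      = (\<integral>\<^sup>+ a. ennreal (a * exp (- (a\<^sup>2 * w) / v)) * indicator {r..} a \<partial>lborel)"
    by (intro nn_integral_cong_AE AE_I[where N="{r}"]) (auto split: split_indicator)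
  also have "\<dots> = ennreal (0 - ?F r)"
    using w v r
    by (intro nn_integral_FTC_atLeast[OF _ _ _ lim])
       (auto intro!: derivative_eq_intros simp: field_simps power2_eq_square)
  finally show ?thesis by simp
qed

definition gauss_outside :: "real \<Rightarrow> real \<Rightarrow> real \<times> real \<Rightarrow> ennreal" where
  "gauss_outside v T p =
     ennreal (exp (- ((fst p)\<^sup>2 + (snd p)\<^sup>2) / v)) * indicator {p. T < (fst p)\<^sup>2 + (snd p)\<^sup>2} p"

lemma gauss_outside_measurable[measurable]: "gauss_outside v T \<in> borel_measurable (lborel \<Otimes>\<^sub>M lborel)"
  unfolding gauss_outside_def by measurable

text \<open>The integrand of the quadrant integral after substituting \<open>b = a u\<close>; it is an exact
  derivative in \<open>a\<close>.\<close>

definition gauss_outside_slope :: "real \<Rightarrow> real \<Rightarrow> real \<Rightarrow> real \<Rightarrow> ennreal" where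
  "gauss_outside_slope v T a u = ennreal (a * exp (- (a\<^sup>2 * (1 + u\<^sup>2)) / v))
      * indicator {x. T < x} (a\<^sup>2 * (1 + u\<^sup>2)) * indicator {0<..} u * indicator {0<..} a"

lemma gauss_outside_slope_measurable[measurable]:
  "case_prod (gauss_outside_slope v T) \<in> borel_measurable (lborel \<Otimes>\<^sub>M lborel)"
  unfolding gauss_outside_slope_def by measurable

lemma nn_integral_gauss_outside_slope_subst:
  "(\<integral>\<^sup>+ b. gauss_outside v T (a, b) * indicator {0<..} b * indicator {0<..} a \<partial>lborel)
     = (\<integral>\<^sup>+ u. gauss_outside_slope v T a u \<partial>lborel)"
proof (cases "a > 0")
  case False
  then show ?thesis by (simp add: gauss_outside_slope_def)
next
  case True
  have "(\<integral>\<^sup>+ b. gauss_outside v T (a, b) * indicator {0<..} b * indicator {0<..} a \<partial>lborel)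
     = ennreal \<bar>a\<bar> * (\<integral>\<^sup>+ u. gauss_outside v T (a, 0 + a * u) * indicator {0<..} (0 + a * u) * indicator {0<..} a \<partial>lborel)"
    using True by (intro nn_integral_real_affine) auto
  also have "\<dots> = (\<integral>\<^sup>+ u. ennreal \<bar>a\<bar> * (gauss_outside v T (a, 0 + a * u) * indicator {0<..} (0 + a * u) * indicator {0<..} a) \<partial>lborel)"
    by (rule nn_integral_cmult[symmetric]) measurable
  also have "\<dots> = (\<integral>\<^sup>+ u. gauss_outside_slope v T a u \<partial>lborel)"
  proof (rule nn_integral_cong)
    fix u :: real
    have "a\<^sup>2 + (a * u)\<^sup>2 = a\<^sup>2 * (1 + u\<^sup>2)" by (simp add: algebra_simps power_mult_distrib)
    then show "ennreal \<bar>a\<bar> * (gauss_outside v T (a, 0 + a * u) * indicator {0<..} (0 + a * u) * indicator {0<..} a)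
        = gauss_outside_slope v T a u"
      using True unfolding gauss_outside_slope_def gauss_outside_def
      by (auto simp: ennreal_mult'' zero_less_mult_iff split: split_indicator)
  qed
  finally show ?thesis .
qed

lemma nn_integral_gauss_outside_slope:
  assumes v: "v > 0" and T: "T \<ge> 0"
  shows "(\<integral>\<^sup>+ a. gauss_outside_slope v T a u \<partial>lborel)
     = ennreal (v / 2 * exp (- T / v)) * (ennreal (1 / (1 + u\<^sup>2)) * indicator {0<..} u)"
proof (cases "u > 0")
  case False
  then show ?thesis by (simp add: gauss_outside_slope_def)
next
  case True
  define w where "w = 1 + u\<^sup>2"
  have w: "w > 0" unfolding w_def by (simp add: add_pos_nonneg)
  define r where "r = sqrt (T / w)"
  have r: "r \<ge> 0" and r2: "r\<^sup>2 * w = T" unfolding r_def using T w by simp_all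
  have "(T < a\<^sup>2 * w \<and> 0 < a) \<longleftrightarrow> r < a" for a
  proof (cases "0 < a")
    case True
    then have "r < a \<longleftrightarrow> sqrt (T / w) < sqrt (a\<^sup>2)" unfolding r_def by simp
    also have "\<dots> \<longleftrightarrow> T < a\<^sup>2 * w" by (simp only: real_sqrt_less_iff pos_divide_less_eq[OF w])
    finally show ?thesis using True by simp
  qed (use r in auto)
  then have "gauss_outside_slope v T a u = ennreal (a * exp (- (a\<^sup>2 * w) / v)) * indicator {r<..} a" for a
    using True unfolding gauss_outside_slope_def w_def[symmetric] by (auto split: split_indicator)
  then have "(\<integral>\<^sup>+ a. gauss_outside_slope v T a u \<partial>lborel) = ennreal (v / (2 * w) * exp (- T / v))"
    using nn_integral_gaussian_moment_tail[OF w v r] r2 by simp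
  then show ?thesis
    using True v by (simp add: w_def ennreal_mult''[symmetric] add_pos_nonneg)
qed

lemma nn_integral_gauss_outside_quadrant:
  assumes v: "v > 0" and T: "T \<ge> 0"
  shows "(\<integral>\<^sup>+ a. \<integral>\<^sup>+ b. gauss_outside v T (a, b) * indicator {0<..} b * indicator {0<..} a \<partial>lborel \<partial>lborel)
     = ennreal (v * pi / 4 * exp (- T / v))"
proof -
  have "(\<integral>\<^sup>+ a. \<integral>\<^sup>+ b. gauss_outside v T (a, b) * indicator {0<..} b * indicator {0<..} a \<partial>lborel \<partial>lborel)
      = (\<integral>\<^sup>+ u. \<integral>\<^sup>+ a. gauss_outside_slope v T a u \<partial>lborel \<partial>lborel)"
    unfolding nn_integral_gauss_outside_slope_subst by (rule lborel_pair.Fubini'[symmetric]) measurable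
  also have "\<dots> = ennreal (v / 2 * exp (- T / v)) * (\<integral>\<^sup>+ u. ennreal (1 / (1 + u\<^sup>2)) * indicator {0<..} u \<partial>lborel)"
    unfolding nn_integral_gauss_outside_slope[OF v T] by (rule nn_integral_cmult) measurable
  also have "\<dots> = ennreal (v * pi / 4 * exp (- T / v))"
    unfolding nn_integral_inverse_1_plus_square_pos using v by (simp add: ennreal_mult''[symmetric])
  finally show ?thesis .
qed

lemma nn_integral_gauss_outside:
  assumes "v > 0" and "T \<ge> 0"
  shows "(\<integral>\<^sup>+ p. gauss_outside v T p \<partial>(lborel \<Otimes>\<^sub>M lborel)) = ennreal (v * pi * exp (- T / v))"
proof -
  have "(\<integral>\<^sup>+ p. gauss_outside v T p \<partial>(lborel \<Otimes>\<^sub>M lborel))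
      = 4 * ennreal (v * pi / 4 * exp (- T / v))"
    unfolding nn_integral_gauss_outside_quadrant[OF assms, symmetric]
    by (rule nn_integral_plane_even) (auto simp: gauss_outside_def split: split_indicator)
  also have "\<dots> = ennreal (v * pi * exp (- T / v))"
    using ennreal_mult'[of 4 "v * pi / 4 * exp (- T / v)"] by simp
  finally show ?thesis .
qed

section \<open>The planar Gaussian\<close>

definition normal2 :: "real \<Rightarrow> (real \<times> real) measure" where
  "normal2 \<sigma> = density lborel (normal_density 0 \<sigma>) \<Otimes>\<^sub>M density lborel (normal_density 0 \<sigma>)"

lemma sets_normal2[simp, measurable_cong]: "sets (normal2 \<sigma>) = sets (lborel \<Otimes>\<^sub>M lborel)"
  unfolding normal2_def by (intro sets_pair_measure_cong) simp_all

lemma prob_space_normal2: "\<sigma> > 0 \<Longrightarrow> prob_space (normal2 \<sigma>)"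
  unfolding normal2_def by (intro prob_space_pair prob_space_normal_density)

lemma normal_density_mult_normal_density:
  assumes "\<sigma> > 0"
  shows "normal_density 0 \<sigma> a * normal_density 0 \<sigma> b = exp (- (a\<^sup>2 + b\<^sup>2) / (2 * \<sigma>\<^sup>2)) / (2 * pi * \<sigma>\<^sup>2)"
proof -
  have "sqrt (2 * pi * \<sigma>\<^sup>2) * sqrt (2 * pi * \<sigma>\<^sup>2) = 2 * pi * \<sigma>\<^sup>2" by simp
  then show ?thesis
    unfolding normal_density_def by (simp add: mult_exp_exp diff_divide_distrib)
qed

lemma nn_integral_normal2:
  fixes f :: "real \<times> real \<Rightarrow> ennreal"
  assumes s: "\<sigma> > 0" and [measurable]: "f \<in> borel_measurable (lborel \<Otimes>\<^sub>M lborel)"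
  shows "(\<integral>\<^sup>+ p. f p \<partial>normal2 \<sigma>)
       = (\<integral>\<^sup>+ p. ennreal (exp (- ((fst p)\<^sup>2 + (snd p)\<^sup>2) / (2 * \<sigma>\<^sup>2)) / (2 * pi * \<sigma>\<^sup>2)) * f p \<partial>(lborel \<Otimes>\<^sub>M lborel))"
proof -
  have density: "normal2 \<sigma> = density (lborel \<Otimes>\<^sub>M lborel)
      (\<lambda>(x, y). ennreal (normal_density 0 \<sigma> x) * ennreal (normal_density 0 \<sigma> y))"
    unfolding normal2_def using s
    by (intro pair_measure_density)
       (auto intro!: prob_space_imp_sigma_finite prob_space_normal_density lborel.sigma_finite_measure_axioms)
  have "ennreal (normal_density 0 \<sigma> a) * ennreal (normal_density 0 \<sigma> b)
      = ennreal (exp (- (a\<^sup>2 + b\<^sup>2) / (2 * \<sigma>\<^sup>2)) / (2 * pi * \<sigma>\<^sup>2))" for a b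
    by (subst ennreal_mult[symmetric]) (auto simp only: normal_density_mult_normal_density[OF s] normal_density_nonneg)
  then show ?thesis
    unfolding density by (subst nn_integral_density) (auto intro!: nn_integral_cong)
qed

lemma normal2_outside_disc:
  assumes s: "\<sigma> > 0" and T: "T \<ge> 0"
  shows "(\<integral>\<^sup>+ p. indicator {p. T < (fst p)\<^sup>2 + (snd p)\<^sup>2} p \<partial>normal2 \<sigma>) = ennreal (exp (- T / (2 * \<sigma>\<^sup>2)))"
proof -
  have v: "2 * \<sigma>\<^sup>2 > 0" using s by simp
  have "(\<integral>\<^sup>+ p. indicator {p. T < (fst p)\<^sup>2 + (snd p)\<^sup>2} p \<partial>normal2 \<sigma>)
     = (\<integral>\<^sup>+ p. ennreal (1 / (2 * pi * \<sigma>\<^sup>2)) * gauss_outside (2 * \<sigma>\<^sup>2) T p \<partial>(lborel \<Otimes>\<^sub>M lborel))"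
    using s by (subst nn_integral_normal2)
      (auto intro!: nn_integral_cong simp: gauss_outside_def ennreal_mult[symmetric] split: split_indicator)
  also have "\<dots> = ennreal (1 / (2 * pi * \<sigma>\<^sup>2)) * ennreal (2 * \<sigma>\<^sup>2 * pi * exp (- T / (2 * \<sigma>\<^sup>2)))"
    by (subst nn_integral_cmult) (auto simp: nn_integral_gauss_outside[OF v T])
  also have "\<dots> = ennreal (exp (- T / (2 * \<sigma>\<^sup>2)))"
    using s by (simp add: ennreal_mult''[symmetric])
  finally show ?thesis .
qed

lemma nn_integral_normal2_rotation:
  fixes f :: "real \<times> real \<Rightarrow> ennreal"
  assumes s: "\<sigma> > 0" and [measurable]: "f \<in> borel_measurable (lborel \<Otimes>\<^sub>M lborel)"
    and cs: "c\<^sup>2 + s\<^sup>2 = 1"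
  shows "(\<integral>\<^sup>+ p. f (plane_rotation c s p) \<partial>normal2 \<sigma>) = (\<integral>\<^sup>+ p. f p \<partial>normal2 \<sigma>)"
proof -
  define g where "g = (\<lambda>p. ennreal (exp (- ((fst p)\<^sup>2 + (snd p)\<^sup>2) / (2 * \<sigma>\<^sup>2)) / (2 * pi * \<sigma>\<^sup>2)) * f p)"
  have [measurable]: "g \<in> borel_measurable (lborel \<Otimes>\<^sub>M lborel)" unfolding g_def by measurable
  have "(\<integral>\<^sup>+ p. f (plane_rotation c s p) \<partial>normal2 \<sigma>) = (\<integral>\<^sup>+ p. g (plane_rotation c s p) \<partial>(lborel \<Otimes>\<^sub>M lborel))"
    by (subst nn_integral_normal2[OF s]) (auto simp: g_def plane_rotation_norm[OF cs] simp del: minus_add_distrib)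
  also have "\<dots> = (\<integral>\<^sup>+ p. g p \<partial>(lborel \<Otimes>\<^sub>M lborel))"
    by (rule nn_integral_plane_rotation[OF _ cs]) measurable
  also have "\<dots> = (\<integral>\<^sup>+ p. f p \<partial>normal2 \<sigma>)"
    by (subst nn_integral_normal2[OF s]) (auto simp: g_def)
  finally show ?thesis .
qed

abbreviation normal_measure :: "real \<Rightarrow> real measure" where
  "normal_measure \<sigma> \<equiv> density lborel (normal_density 0 \<sigma>)"

lemma nn_integral_normal_add:
  fixes g :: "real \<Rightarrow> ennreal"
  assumes s: "\<sigma> > 0" and t: "\<tau> > 0" and [measurable]: "g \<in> borel_measurable borel"
  shows "(\<integral>\<^sup>+ a. \<integral>\<^sup>+ b. g (a + b) \<partial>normal_measure \<tau> \<partial>normal_measure \<sigma>)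
       = (\<integral>\<^sup>+ u. g u \<partial>normal_measure (sqrt (\<tau>\<^sup>2 + \<sigma>\<^sup>2)))"
proof -
  have shift: "(\<integral>\<^sup>+ b. ennreal (normal_density 0 \<tau> b) * g (a + b) \<partial>lborel)
      = (\<integral>\<^sup>+ u. ennreal (normal_density 0 \<tau> (u - a)) * g u \<partial>lborel)" for a
    using nn_integral_real_affine[of "\<lambda>b. ennreal (normal_density 0 \<tau> b) * g (a + b)" 1 "- a"] by simp
  have "(\<integral>\<^sup>+ a. \<integral>\<^sup>+ b. g (a + b) \<partial>normal_measure \<tau> \<partial>normal_measure \<sigma>)
      = (\<integral>\<^sup>+ a. \<integral>\<^sup>+ u. ennreal (normal_density 0 \<tau> (u - a) * normal_density 0 \<sigma> a) * g u \<partial>lborel \<partial>lborel)"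
    by (simp add: nn_integral_density shift nn_integral_cmult[symmetric] ennreal_mult mult.assoc mult.left_commute)
  also have "\<dots> = (\<integral>\<^sup>+ u. (\<integral>\<^sup>+ a. ennreal (normal_density 0 \<tau> (u - a) * normal_density 0 \<sigma> a) \<partial>lborel) * g u \<partial>lborel)"
    by (subst lborel_pair.Fubini') (auto intro!: nn_integral_cong simp: nn_integral_multc)
  also have "\<dots> = (\<integral>\<^sup>+ u. g u \<partial>normal_measure (sqrt (\<tau>\<^sup>2 + \<sigma>\<^sup>2)))"
    by (simp add: conv_normal_density_zero_mean[OF t s, THEN fun_cong] nn_integral_density)
  finally show ?thesis .
qed

lemma nn_integral_normal2_iterated:
  fixes f :: "real \<times> real \<Rightarrow> ennreal"
  assumes s: "\<sigma> > 0" and [measurable]: "f \<in> borel_measurable (lborel \<Otimes>\<^sub>M lborel)"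
  shows "(\<integral>\<^sup>+ p. f p \<partial>normal2 \<sigma>) = (\<integral>\<^sup>+ a. \<integral>\<^sup>+ b. f (a, b) \<partial>normal_measure \<sigma> \<partial>normal_measure \<sigma>)"
proof -
  interpret sigma_finite_measure "normal_measure \<sigma>"
    using s by (intro prob_space_imp_sigma_finite prob_space_normal_density)
  show ?thesis unfolding normal2_def by (rule nn_integral_fst[symmetric]) measurable
qed

lemma nn_integral_normal2_add:
  fixes f :: "real \<times> real \<Rightarrow> ennreal"
  assumes s: "\<sigma> > 0" and t: "\<tau> > 0" and [measurable]: "f \<in> borel_measurable (lborel \<Otimes>\<^sub>M lborel)"
  shows "(\<integral>\<^sup>+ w. \<integral>\<^sup>+ z. f (fst w + fst z, snd w + snd z) \<partial>normal2 \<tau> \<partial>normal2 \<sigma>)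
       = (\<integral>\<^sup>+ v. f v \<partial>normal2 (sqrt (\<tau>\<^sup>2 + \<sigma>\<^sup>2)))"
proof -
  interpret pair_sigma_finite "normal_measure \<sigma>" "normal_measure \<tau>"
    using s t by (intro pair_sigma_finite.intro prob_space_imp_sigma_finite prob_space_normal_density)
  define \<rho> where "\<rho> = sqrt (\<tau>\<^sup>2 + \<sigma>\<^sup>2)"
  have r: "\<rho> > 0" unfolding \<rho>_def using s t by (simp add: add_pos_pos)
  interpret \<rho>: sigma_finite_measure "normal_measure \<rho>"
    using r by (intro prob_space_imp_sigma_finite prob_space_normal_density)
  have "(\<integral>\<^sup>+ w. \<integral>\<^sup>+ z. f (fst w + fst z, snd w + snd z) \<partial>normal2 \<tau> \<partial>normal2 \<sigma>)
     = (\<integral>\<^sup>+ w1. \<integral>\<^sup>+ w2. \<integral>\<^sup>+ z1. \<integral>\<^sup>+ z2. f (w1 + z1, w2 + z2)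
          \<partial>normal_measure \<tau> \<partial>normal_measure \<tau> \<partial>normal_measure \<sigma> \<partial>normal_measure \<sigma>)"
    by (simp add: nn_integral_normal2_iterated[OF s] nn_integral_normal2_iterated[OF t])
  also have "\<dots> = (\<integral>\<^sup>+ w1. \<integral>\<^sup>+ z1. \<integral>\<^sup>+ w2. \<integral>\<^sup>+ z2. f (w1 + z1, w2 + z2)
          \<partial>normal_measure \<tau> \<partial>normal_measure \<sigma> \<partial>normal_measure \<tau> \<partial>normal_measure \<sigma>)"
    by (intro nn_integral_cong Fubini'[symmetric]) measurable
  also have "\<dots> = (\<integral>\<^sup>+ w1. \<integral>\<^sup>+ z1. \<integral>\<^sup>+ v2. f (w1 + z1, v2) \<partial>normal_measure \<rho> \<partial>normal_measure \<tau> \<partial>normal_measure \<sigma>)"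
    by (intro nn_integral_cong nn_integral_normal_add[OF s t, folded \<rho>_def]) measurable
  also have "\<dots> = (\<integral>\<^sup>+ v1. \<integral>\<^sup>+ v2. f (v1, v2) \<partial>normal_measure \<rho> \<partial>normal_measure \<rho>)"
    by (rule nn_integral_normal_add[OF s t, folded \<rho>_def]) measurable
  also have "\<dots> = (\<integral>\<^sup>+ v. f v \<partial>normal2 \<rho>)"
    by (rule nn_integral_normal2_iterated[OF r, symmetric]) measurable
  finally show ?thesis unfolding \<rho>_def .
qed

section \<open>The second-level rate is exponential\<close>

lemma distr_normal2_norm_exponential:
  assumes cr: "cr > 0" and m1: "m1 > 0"
  shows "distr (normal2 (sqrt (cr * m1 / 2))) lborel (\<lambda>w. ((fst w)\<^sup>2 + (snd w)\<^sup>2) / cr)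
       = density lborel (exponential_density (1 / m1))"
proof -
  define \<sigma> where "\<sigma> = sqrt (cr * m1 / 2)"
  have s: "\<sigma> > 0" and s2: "2 * \<sigma>\<^sup>2 = cr * m1" unfolding \<sigma>_def using cr m1 by simp_all
  interpret prob_space "normal2 \<sigma>" by (rule prob_space_normal2[OF s])
  have "distributed (normal2 \<sigma>) lborel (\<lambda>w. ((fst w)\<^sup>2 + (snd w)\<^sup>2) / cr) (exponential_density (1 / m1))"
  proof (rule exponential_distributedI)
    fix a :: real assume a: "0 \<le> a"
    have sets: "{x \<in> space (normal2 \<sigma>). a < ((fst x)\<^sup>2 + (snd x)\<^sup>2) / cr} \<in> sets (normal2 \<sigma>)" by measurable
    have "emeasure (normal2 \<sigma>) {x \<in> space (normal2 \<sigma>). a < ((fst x)\<^sup>2 + (snd x)\<^sup>2) / cr}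
        = (\<integral>\<^sup>+ p. indicator {p. cr * a < (fst p)\<^sup>2 + (snd p)\<^sup>2} p \<partial>normal2 \<sigma>)"
      using sets cr
      by (subst nn_integral_indicator[symmetric])
         (auto intro!: nn_integral_cong simp: field_simps space_pair_measure normal2_def split: split_indicator)
    also have "\<dots> = ennreal (exp (- a * (1 / m1)))"
      using normal2_outside_disc[OF s, of "cr * a"] cr m1 a s2 by simp
    finally have "emeasure (normal2 \<sigma>) {x \<in> space (normal2 \<sigma>). a < ((fst x)\<^sup>2 + (snd x)\<^sup>2) / cr}
        = ennreal (exp (- a * (1 / m1)))" .
    moreover have "{x \<in> space (normal2 \<sigma>). ((fst x)\<^sup>2 + (snd x)\<^sup>2) / cr \<le> a}
        = space (normal2 \<sigma>) - {x \<in> space (normal2 \<sigma>). a < ((fst x)\<^sup>2 + (snd x)\<^sup>2) / cr}" by auto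
    ultimately show "emeasure (normal2 \<sigma>) {x \<in> space (normal2 \<sigma>). ((fst x)\<^sup>2 + (snd x)\<^sup>2) / cr \<le> a}
        = 1 - ennreal (exp (- a * (1 / m1)))"
      using sets by (simp add: emeasure_compl emeasure_space_1)
  qed (use m1 in simp_all)
  then show ?thesis unfolding distributed_def \<sigma>_def by simp
qed

text \<open>Rotating \<open>z\<close> moves the point \<open>(\<bar>w\<bar>, 0)\<close> onto \<open>w\<close>.\<close>

lemma normal2_shift_radial:
  assumes s: "\<sigma> > 0"
  shows "(\<integral>\<^sup>+ z. indicator {z. t < (sqrt ((fst w)\<^sup>2 + (snd w)\<^sup>2) + fst z)\<^sup>2 + (snd z)\<^sup>2} z \<partial>normal2 \<sigma>)
       = (\<integral>\<^sup>+ z. indicator {z. t < (fst w + fst z)\<^sup>2 + (snd w + snd z)\<^sup>2} z \<partial>normal2 \<sigma>)"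
proof (cases "w = 0")
  case False
  define r where "r = sqrt ((fst w)\<^sup>2 + (snd w)\<^sup>2)"
  have r2: "r\<^sup>2 = (fst w)\<^sup>2 + (snd w)\<^sup>2" unfolding r_def by simp
  with False have r: "r > 0"
    by (metis prod_eq_iff r_def real_sqrt_gt_zero sum_power2_gt_zero_iff zero_prod_def fst_zero snd_zero)
  define c where "c = fst w / r"
  define s' where "s' = snd w / r"
  have cs: "c\<^sup>2 + s'\<^sup>2 = 1"
    unfolding c_def s'_def power_divide r2[symmetric] add_divide_distrib[symmetric] using r by simp
  have w: "fst w = c * r" "snd w = s' * r" unfolding c_def s'_def using r by simp_all
  have "(fst w + fst (plane_rotation c s' z))\<^sup>2 + (snd w + snd (plane_rotation c s' z))\<^sup>2
      = (c\<^sup>2 + s'\<^sup>2) * ((r + fst z)\<^sup>2 + (snd z)\<^sup>2)" for z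
    unfolding w plane_rotation_def by (simp add: power2_eq_square algebra_simps)
  then have "(\<lambda>z. indicator {z. t < (fst w + fst z)\<^sup>2 + (snd w + snd z)\<^sup>2} (plane_rotation c s' z) :: ennreal)
      = indicator {z. t < (r + fst z)\<^sup>2 + (snd z)\<^sup>2}"
    using cs by (auto split: split_indicator)
  with nn_integral_normal2_rotation[OF s _ cs,
      of "indicator {z. t < (fst w + fst z)\<^sup>2 + (snd w + snd z)\<^sup>2}"]
  show ?thesis unfolding r_def by simp
qed simp

lemma nn_integral_exponential_normal2_tail:
  assumes cr: "cr > 0" and m1: "m1 > 0" and Re0: "Re0 > 0" and t: "t \<ge> 0"
  shows "(\<integral>\<^sup>+ x. \<integral>\<^sup>+ z. indicator {z. t < (sqrt (cr * x) + fst z)\<^sup>2 + (snd z)\<^sup>2} z \<partial>normal2 (sqrt (Re0 / 2))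
           \<partial>density lborel (exponential_density (1 / m1)))
       = ennreal (exp (- t / (cr * m1 + Re0)))"
proof -
  define \<sigma>z where "\<sigma>z = sqrt (Re0 / 2)"
  define \<sigma>x where "\<sigma>x = sqrt (cr * m1 / 2)"
  have sz: "\<sigma>z > 0" and sx: "\<sigma>x > 0" unfolding \<sigma>z_def \<sigma>x_def using cr m1 Re0 by simp_all
  interpret Z: prob_space "normal2 \<sigma>z" by (rule prob_space_normal2[OF sz])
  define G where "G = (\<lambda>x. \<integral>\<^sup>+ z. indicator {z. t < (sqrt (cr * x) + fst z)\<^sup>2 + (snd z)\<^sup>2} z \<partial>normal2 \<sigma>z)"
  have [measurable]: "G \<in> borel_measurable borel" unfolding G_def by measurable
  have "(\<integral>\<^sup>+ x. G x \<partial>density lborel (exponential_density (1 / m1)))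
      = (\<integral>\<^sup>+ w. G (((fst w)\<^sup>2 + (snd w)\<^sup>2) / cr) \<partial>normal2 \<sigma>x)"
    unfolding \<sigma>x_def distr_normal2_norm_exponential[OF cr m1, symmetric]
    by (rule nn_integral_distr) measurable
  also have "\<dots> = (\<integral>\<^sup>+ w. \<integral>\<^sup>+ z. indicator {z. t < (fst w + fst z)\<^sup>2 + (snd w + snd z)\<^sup>2} z \<partial>normal2 \<sigma>z \<partial>normal2 \<sigma>x)"
    using cr by (intro nn_integral_cong) (simp add: G_def normal2_shift_radial[OF sz])
  also have "\<dots> = (\<integral>\<^sup>+ v. indicator {v. t < (fst v)\<^sup>2 + (snd v)\<^sup>2} v \<partial>normal2 (sqrt (\<sigma>z\<^sup>2 + \<sigma>x\<^sup>2)))"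
    using nn_integral_normal2_add[OF sx sz, of "indicator {v. t < (fst v)\<^sup>2 + (snd v)\<^sup>2}"]
    by (simp add: indicator_def)
  also have "\<dots> = ennreal (exp (- t / (2 * (sqrt (\<sigma>z\<^sup>2 + \<sigma>x\<^sup>2))\<^sup>2)))"
    using sz sx by (intro normal2_outside_disc t) (simp add: add_pos_pos)
  also have "2 * (sqrt (\<sigma>z\<^sup>2 + \<sigma>x\<^sup>2))\<^sup>2 = cr * m1 + Re0"
    unfolding \<sigma>z_def \<sigma>x_def using cr m1 Re0 by simp
  finally show ?thesis unfolding G_def \<sigma>z_def .
qed

section \<open>A single round\<close>

lemma nn_integral_pair_prob_snd:
  assumes "prob_space A" and "sigma_finite_measure B" and [measurable]: "f \<in> borel_measurable B"
  shows "(\<integral>\<^sup>+ p. f (snd p) \<partial>(A \<Otimes>\<^sub>M B)) = (\<integral>\<^sup>+ y. f y \<partial>B)"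
proof -
  interpret A: prob_space A by fact
  interpret B: sigma_finite_measure B by fact
  show ?thesis by (subst B.nn_integral_fst[symmetric]) (auto simp: A.emeasure_space_1)
qed

lemma nn_integral_pair_prob_fst:
  assumes "sigma_finite_measure A" and "prob_space B" and [measurable]: "f \<in> borel_measurable A"
  shows "(\<integral>\<^sup>+ p. f (fst p) \<partial>(A \<Otimes>\<^sub>M B)) = (\<integral>\<^sup>+ x. f x \<partial>A)"
proof -
  interpret B: prob_space B by fact
  show ?thesis by (subst B.nn_integral_fst[symmetric]) (auto simp: B.emeasure_space_1)
qed

lemma nn_integral_geometric_pmf_Suc:
  assumes p: "p \<in> {0<..1}"
  shows "(\<integral>\<^sup>+ k. ennreal (real k + 1) \<partial>measure_pmf (geometric_pmf p)) = ennreal (1 / p)"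
proof -
  interpret prob_space "measure_pmf (geometric_pmf p)" by (rule prob_space_measure_pmf)
  have int: "integrable (measure_pmf (geometric_pmf p)) (\<lambda>k. real k + 1)"
    using integrable_real_geometric_pmf[OF p] by simp
  have "(\<integral>\<^sup>+ k. ennreal (real k + 1) \<partial>measure_pmf (geometric_pmf p))
      = ennreal (\<integral>k. real k + 1 \<partial>measure_pmf (geometric_pmf p))"
    by (rule nn_integral_eq_integral[OF int]) simp
  also have "(\<integral>k. real k + 1 \<partial>measure_pmf (geometric_pmf p)) = (1 - p) / p + 1"
    using integrable_real_geometric_pmf[OF p] expectation_geometric_pmf[OF p] by simp
  also have "\<dots> = 1 / p" using p by (simp add: field_simps)
  finally show ?thesis .
qed

definition round_R2 :: "real \<Rightarrow> obs \<Rightarrow> real" where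
  "round_R2 cr ob = (sqrt (cr * fst (snd ob)) + fst (snd (snd ob)))\<^sup>2 + (snd (snd (snd ob)))\<^sup>2"

lemma R2of_eq_round_R2: "R2of cr \<omega> n = round_R2 cr (\<omega> n)"
  unfolding R2of_def round_R2_def R1of_def ..

lemma round_dist_eq_normal2: "round_dist ps m1 Re0 = measure_pmf (geometric_pmf ps) \<Otimes>\<^sub>M
    (density lborel (exponential_density (1 / m1)) \<Otimes>\<^sub>M normal2 (sqrt (Re0 / 2)))"
  unfolding round_dist_def normal2_def ..

lemma sets_round_dist[measurable_cong]:
  "sets (round_dist ps m1 Re0) = sets (count_space UNIV \<Otimes>\<^sub>M (borel \<Otimes>\<^sub>M (borel \<Otimes>\<^sub>M borel)))"
  unfolding round_dist_def by (intro sets_pair_measure_cong) simp_all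

lemma space_round_dist[simp]: "space (round_dist ps m1 Re0) = UNIV"
  unfolding round_dist_def by (simp add: space_pair_measure)

lemma round_R2_measurable[measurable]: "round_R2 cr \<in> borel_measurable (round_dist ps m1 Re0)"
  unfolding round_R2_def by measurable

lemma prob_space_round_dist:
  assumes "m1 > 0" "Re0 > 0"
  shows "prob_space (round_dist ps m1 Re0)"
  unfolding round_dist_eq_normal2 using assms
  by (intro prob_space_pair prob_space_measure_pmf prob_space_exponential_density prob_space_normal2) auto

lemma nn_integral_round_K:
  assumes "0 < ps" "ps \<le> 1" "m1 > 0" "Re0 > 0"
  shows "(\<integral>\<^sup>+ ob. ennreal (real (fst ob) + 1) \<partial>round_dist ps m1 Re0) = ennreal (1 / ps)"
proof -
  have "prob_space (density lborel (exponential_density (1 / m1)) \<Otimes>\<^sub>M normal2 (sqrt (Re0 / 2)))"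
    using assms by (intro prob_space_pair prob_space_exponential_density prob_space_normal2) simp_all
  then have "(\<integral>\<^sup>+ ob. ennreal (real (fst ob) + 1) \<partial>round_dist ps m1 Re0)
      = (\<integral>\<^sup>+ k. ennreal (real k + 1) \<partial>measure_pmf (geometric_pmf ps))"
    unfolding round_dist_eq_normal2
    by (intro nn_integral_pair_prob_fst) (auto intro: prob_space_imp_sigma_finite prob_space_measure_pmf)
  also have "\<dots> = ennreal (1 / ps)"
    using assms by (intro nn_integral_geometric_pmf_Suc) simp
  finally show ?thesis .
qed

lemma round_R2_tail:
  assumes cr: "cr > 0" and m1: "m1 > 0" and Re0: "Re0 > 0" and t: "t \<ge> 0"
  shows "emeasure (round_dist ps m1 Re0) {ob. t < round_R2 cr ob} = ennreal (exp (- t / (cr * m1 + Re0)))"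
proof -
  let ?E = "density lborel (exponential_density (1 / m1))" and ?Z = "normal2 (sqrt (Re0 / 2))"
  interpret Z: prob_space ?Z using Re0 by (intro prob_space_normal2) simp
  interpret E: prob_space ?E using m1 by (intro prob_space_exponential_density) simp
  interpret EZ: pair_sigma_finite ?E ?Z by unfold_locales
  have "{ob \<in> space (round_dist ps m1 Re0). t < round_R2 cr ob} \<in> sets (round_dist ps m1 Re0)"
    by measurable
  then have "emeasure (round_dist ps m1 Re0) {ob. t < round_R2 cr ob}
      = (\<integral>\<^sup>+ ob. indicator {ob. t < round_R2 cr ob} ob \<partial>round_dist ps m1 Re0)"
    by simp
  also have "\<dots> = (\<integral>\<^sup>+ ob. indicator {y. t < (sqrt (cr * fst y) + fst (snd y))\<^sup>2 + (snd (snd y))\<^sup>2} (snd ob)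
           \<partial>(measure_pmf (geometric_pmf ps) \<Otimes>\<^sub>M (?E \<Otimes>\<^sub>M ?Z)))"
    unfolding round_dist_eq_normal2
    by (auto intro!: nn_integral_cong simp: round_R2_def split: split_indicator)
  also have "\<dots> = (\<integral>\<^sup>+ y. indicator {y. t < (sqrt (cr * fst y) + fst (snd y))\<^sup>2 + (snd (snd y))\<^sup>2} y \<partial>(?E \<Otimes>\<^sub>M ?Z))"
    by (rule nn_integral_pair_prob_snd) (auto intro!: prob_space_measure_pmf EZ.sigma_finite_measure_axioms)
  also have "\<dots> = (\<integral>\<^sup>+ x. \<integral>\<^sup>+ z. indicator {z. t < (sqrt (cr * x) + fst z)\<^sup>2 + (snd z)\<^sup>2} z \<partial>?Z \<partial>?E)"
    by (subst Z.nn_integral_fst[symmetric]) (auto intro!: nn_integral_cong simp: indicator_def)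
  also have "\<dots> = ennreal (exp (- t / (cr * m1 + Re0)))"
    by (rule nn_integral_exponential_normal2_tail[OF cr m1 Re0 t])
  finally show ?thesis .
qed

lemma nn_integral_PiM_prod_finite:
  assumes D: "prob_space D" and J: "finite J" and [measurable]: "\<And>i. i \<in> J \<Longrightarrow> g i \<in> borel_measurable D"
  shows "(\<integral>\<^sup>+ \<omega>. (\<Prod>i\<in>J. g i (\<omega> i)) \<partial>PiM UNIV (\<lambda>_. D)) = (\<Prod>i\<in>J. \<integral>\<^sup>+ x. g i x \<partial>D)"
proof -
  interpret D: prob_space D by (rule D)
  interpret product_prob_space "\<lambda>_. D" UNIV by unfold_locales
  have [measurable]: "(\<lambda>x. \<Prod>i\<in>J. g i (x i)) \<in> borel_measurable (PiM J (\<lambda>_. D))"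
    by (intro borel_measurable_prod_ennreal measurable_compose[OF measurable_component_singleton]) auto
  have "(\<integral>\<^sup>+ \<omega>. (\<Prod>i\<in>J. g i (\<omega> i)) \<partial>PiM UNIV (\<lambda>_. D))
      = (\<integral>\<^sup>+ x. (\<Prod>i\<in>J. g i (x i)) \<partial>distr (PiM UNIV (\<lambda>_. D)) (PiM J (\<lambda>_. D)) (\<lambda>\<omega>. restrict \<omega> J))"
    by (subst nn_integral_distr) (auto intro!: measurable_restrict_subset nn_integral_cong prod.cong)
  also have "\<dots> = (\<Prod>i\<in>J. \<integral>\<^sup>+ x. g i x \<partial>D)"
    using J by (subst distr_PiM_restrict_finite) (auto intro!: product_nn_integral_prod)
  finally show ?thesis .
qed

section \<open>The upper bound\<close>

locale limited_feedback =
  fixes ps tau R1 m1 cr Re0 :: real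
  assumes ps: "0 < ps" "ps < 1" and tau: "0 < tau" "tau < 1" and R1: "0 < R1"
    and m1: "0 < m1" and cr: "0 < cr" and Re0: "0 < Re0"
begin

abbreviation "D \<equiv> round_dist ps m1 Re0"
abbreviation "M \<equiv> sample_space ps m1 Re0"

sublocale D: prob_space D by (rule prob_space_round_dist[OF m1 Re0])

lemma sample_space_eq: "M = PiM UNIV (\<lambda>_. D)"
  unfolding sample_space_def ..

sublocale M: prob_space M
  unfolding sample_space_eq by (rule prob_space_PiM) (rule D.prob_space_axioms)

lemma sets_sample_space[measurable_cong]: "sets M = sets (PiM UNIV (\<lambda>_. D))"
  unfolding sample_space_eq ..

lemma Kof_measurable[measurable]: "(\<lambda>\<omega>. Kof \<omega> j) \<in> M \<rightarrow>\<^sub>M count_space UNIV"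
  unfolding Kof_def by measurable

lemma has_bochner_integral_Kof: "has_bochner_integral M (\<lambda>\<omega>. real (Kof \<omega> j)) (1 / ps)"
proof (rule has_bochner_integral_nn_integral)
  have "(\<integral>\<^sup>+ \<omega>. ennreal (real (Kof \<omega> j)) \<partial>M) = (\<integral>\<^sup>+ ob. ennreal (real (fst ob) + 1) \<partial>D)"
    using nn_integral_PiM_prod_finite[OF D.prob_space_axioms, of "{j}" "\<lambda>_ ob. ennreal (real (fst ob) + 1)"]
    by (simp add: sample_space_eq Kof_def add.commute)
  also have "\<dots> = ennreal (1 / ps)"
    using ps m1 Re0 by (intro nn_integral_round_K) simp_all
  finally show "(\<integral>\<^sup>+ \<omega>. ennreal (real (Kof \<omega> j)) \<partial>M) = ennreal (1 / ps)" .
qed (use ps in simp_all)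

lemma total_time_ge_first_contention: "real (Kof \<omega> 0) * tau + 1 \<le> total_time tau cr P \<omega>"
proof -
  have "real (Kof \<omega> 0) * tau \<le> (\<Sum>j\<le>stop_round cr P \<omega>. real (Kof \<omega> j) * tau)"
    using tau by (intro member_le_sum) auto
  moreover have "0 \<le> tau * real (card {j. j < stop_round cr P \<omega> \<and> dec1 cr P \<omega> j = Probe})"
    using tau by simp
  ultimately show ?thesis
    unfolding total_time_def Let_def by linarith
qed

lemma reward_bounds: "0 \<le> reward R1 tau cr P \<omega>" "reward R1 tau cr P \<omega> \<le> R1"
  unfolding reward_def Let_def using R1 tau by (auto simp: mult_left_le)

lemma throughput_le:
  assumes "admissible ps tau R1 m1 cr Re0 P"
  shows "(\<integral>\<omega>. reward R1 tau cr P \<omega> \<partial>M) / (\<integral>\<omega>. total_time tau cr P \<omega> \<partial>M) \<le> R1 / (1 + tau / ps)"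
proof -
  have "has_bochner_integral M (\<lambda>\<omega>. real (Kof \<omega> 0) * tau + 1) (1 / ps * tau + 1)"
    by (intro has_bochner_integral_add has_bochner_integral_mult_left has_bochner_integral_Kof)
       (simp add: has_bochner_integral_iff M.prob_space)
  then have int: "integrable M (\<lambda>\<omega>. real (Kof \<omega> 0) * tau + 1)"
    and first: "(\<integral>\<omega>. real (Kof \<omega> 0) * tau + 1 \<partial>M) = 1 + tau / ps"
    by (auto simp: has_bochner_integral_iff)
  have ET: "1 + tau / ps \<le> (\<integral>\<omega>. total_time tau cr P \<omega> \<partial>M)"
    unfolding first[symmetric] using assms unfolding admissible_def
    by (intro integral_mono total_time_ge_first_contention int) simp_all
  have reward: "(\<integral>\<omega>. reward R1 tau cr P \<omega> \<partial>M) \<le> R1"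
    using M.integral_le_const[of "reward R1 tau cr P" R1] R1 reward_bounds
    by (cases "integrable M (reward R1 tau cr P)") (auto simp: not_integrable_integral_eq)
  have pos: "0 < 1 + tau / ps" using tau ps by (simp add: add_pos_nonneg)
  have "(\<integral>\<omega>. reward R1 tau cr P \<omega> \<partial>M) / (\<integral>\<omega>. total_time tau cr P \<omega> \<partial>M)
      \<le> R1 / (\<integral>\<omega>. total_time tau cr P \<omega> \<partial>M)"
    using ET pos by (intro divide_right_mono reward) linarith
  also have "\<dots> \<le> R1 / (1 + tau / ps)"
    using ET pos R1 by (intro divide_left_mono) auto
  finally show ?thesis .
qed

end

section \<open>The lower bound: always probe\<close>

lemma suminf_ennreal_geometric:
  fixes c q :: real
  assumes "0 \<le> c" "0 \<le> q" "q < 1"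
  shows "(\<Sum>j. ennreal (c * q ^ j)) = ennreal (c / (1 - q))"
proof -
  have "(\<lambda>j. c * q ^ j) sums (c * (1 / (1 - q)))"
    using assms by (intro sums_mult geometric_sums) simp
  with assms show ?thesis by (intro suminf_ennreal_eq) auto
qed

context limited_feedback
begin

definition probe_policy :: policy where
  "probe_policy = ((\<lambda>h x. Probe), (\<lambda>h y. R1 \<le> snd (snd y)))"

definition first_good :: "(nat \<Rightarrow> obs) \<Rightarrow> nat" where
  "first_good \<omega> = (LEAST m. R1 \<le> round_R2 cr (\<omega> m))"

lemma dec1_probe_policy[simp]: "dec1 cr probe_policy \<omega> m = Probe"
  unfolding dec1_def probe_policy_def by simp

lemma stops_probe_policy: "stops cr probe_policy \<omega> m \<longleftrightarrow> R1 \<le> round_R2 cr (\<omega> m)"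
  unfolding stops_def probe_policy_def dec1_def by (simp add: R2of_eq_round_R2)

lemma stop_round_probe_policy: "stop_round cr probe_policy \<omega> = first_good \<omega>"
  unfolding stop_round_def first_good_def stops_probe_policy ..

lemma total_time_probe_policy:
  "total_time tau cr probe_policy \<omega> = (\<Sum>j\<le>first_good \<omega>. real (Kof \<omega> j) * tau) + tau * real (first_good \<omega>) + 1"
  unfolding total_time_def Let_def stop_round_probe_policy by simp

lemma reward_probe_policy:
  "reward R1 tau cr probe_policy \<omega> = (if R1 \<le> round_R2 cr (\<omega> (first_good \<omega>)) then R1 * (1 - tau) else 0)"
  unfolding reward_def Let_def stop_round_probe_policy by (simp add: R2of_eq_round_R2)

lemma first_good_measurable[measurable]: "first_good \<in> M \<rightarrow>\<^sub>M count_space UNIV"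
  unfolding first_good_def by measurable

lemma total_time_probe_policy_measurable[measurable]: "total_time tau cr probe_policy \<in> borel_measurable M"
proof -
  have "(\<lambda>\<omega>. \<Sum>j\<le>first_good \<omega>. real (Kof \<omega> j) * tau) \<in> borel_measurable M"
    by (rule measurable_compose_countable[where f="\<lambda>n \<omega>. \<Sum>j\<le>n. real (Kof \<omega> j) * tau"]) measurable
  then show ?thesis unfolding total_time_probe_policy[abs_def] by measurable
qed

lemma reward_probe_policy_measurable[measurable]: "reward R1 tau cr probe_policy \<in> borel_measurable M"
proof -
  have "(\<lambda>\<omega>. round_R2 cr (\<omega> (first_good \<omega>))) \<in> borel_measurable M"
    by (rule measurable_compose_countable[where f="\<lambda>n \<omega>. round_R2 cr (\<omega> n)"]) measurable
  then show ?thesis unfolding reward_probe_policy[abs_def] by measurable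
qed

definition good_prob :: real where
  "good_prob = measure D {ob. R1 \<le> round_R2 cr ob}"

lemma good_prob_ge: "exp (- R1 / (cr * m1 + Re0)) \<le> good_prob"
proof -
  have "{ob \<in> space D. R1 \<le> round_R2 cr ob} \<in> sets D" by measurable
  then have "measure D {ob. R1 < round_R2 cr ob} \<le> good_prob"
    unfolding good_prob_def by (intro D.finite_measure_mono) auto
  moreover have "measure D {ob. R1 < round_R2 cr ob} = exp (- R1 / (cr * m1 + Re0))"
    using round_R2_tail[OF cr m1 Re0, where t = R1 and ps = ps] R1 by (simp add: D.emeasure_eq_measure)
  ultimately show ?thesis by simp
qed

lemma good_prob_bounds: "0 < good_prob" "good_prob \<le> 1"
  using good_prob_ge exp_gt_zero[of "- R1 / (cr * m1 + Re0)"] unfolding good_prob_def by linarith simp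

definition bad_prefix :: "nat \<Rightarrow> (nat \<Rightarrow> obs) \<Rightarrow> ennreal" where
  "bad_prefix j \<omega> = (\<Prod>i<j. indicator {ob. round_R2 cr ob < R1} (\<omega> i))"

lemma bad_prefix_measurable[measurable]: "bad_prefix j \<in> borel_measurable M"
  unfolding bad_prefix_def by measurable

lemma nn_integral_bad_round: "(\<integral>\<^sup>+ ob. indicator {ob. round_R2 cr ob < R1} ob \<partial>D) = ennreal (1 - good_prob)"
proof -
  have "{ob \<in> space D. R1 \<le> round_R2 cr ob} \<in> sets D" by measurable
  then have good: "{ob. R1 \<le> round_R2 cr ob} \<in> sets D" by simp
  have "{ob. round_R2 cr ob < R1} = space D - {ob. R1 \<le> round_R2 cr ob}" by auto
  then show ?thesis
    unfolding good_prob_def using good good[THEN sets.compl_sets]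
    by (simp add: D.emeasure_eq_measure D.prob_compl del: space_round_dist)
qed

lemma nn_integral_bad_prefix: "(\<integral>\<^sup>+ \<omega>. bad_prefix j \<omega> \<partial>M) = ennreal ((1 - good_prob) ^ j)"
proof -
  have "(\<integral>\<^sup>+ \<omega>. bad_prefix j \<omega> \<partial>M) = (\<Prod>i<j. \<integral>\<^sup>+ ob. indicator {ob. round_R2 cr ob < R1} ob \<partial>D)"
    unfolding bad_prefix_def sample_space_eq by (rule nn_integral_PiM_prod_finite[OF D.prob_space_axioms]) auto
  then show ?thesis
    unfolding nn_integral_bad_round using good_prob_bounds by (simp add: ennreal_power)
qed

text \<open>The contention time of round \<open>j\<close> is independent of the outcomes of the earlier rounds.\<close>

lemma nn_integral_Kof_bad_prefix:
  "(\<integral>\<^sup>+ \<omega>. ennreal (real (Kof \<omega> j)) * bad_prefix j \<omega> \<partial>M) = ennreal (1 / ps * (1 - good_prob) ^ j)"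
proof -
  define g where "g = (\<lambda>i ob. if i = j then ennreal (real (fst ob) + 1) else indicator {ob. round_R2 cr ob < R1} ob)"
  have "{..j} = insert j {..<j}" by auto
  then have "ennreal (real (Kof \<omega> j)) * bad_prefix j \<omega> = (\<Prod>i\<le>j. g i (\<omega> i))" for \<omega>
    unfolding bad_prefix_def g_def Kof_def by (simp add: add.commute)
  moreover have "g i \<in> borel_measurable D" for i unfolding g_def by simp
  ultimately have "(\<integral>\<^sup>+ \<omega>. ennreal (real (Kof \<omega> j)) * bad_prefix j \<omega> \<partial>M) = (\<Prod>i\<le>j. \<integral>\<^sup>+ ob. g i ob \<partial>D)"
    unfolding sample_space_eq by (simp add: nn_integral_PiM_prod_finite[OF D.prob_space_axioms])
  also have "\<dots> = (\<integral>\<^sup>+ ob. ennreal (real (fst ob) + 1) \<partial>D) * (\<Prod>i<j. \<integral>\<^sup>+ ob. indicator {ob. round_R2 cr ob < R1} ob \<partial>D)"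
    using \<open>{..j} = insert j {..<j}\<close> by (simp add: g_def)
  also have "(\<integral>\<^sup>+ ob. ennreal (real (fst ob) + 1) \<partial>D) = ennreal (1 / ps)"
    using ps m1 Re0 by (intro nn_integral_round_K) simp_all
  also have "(\<Prod>i<j. \<integral>\<^sup>+ ob. indicator {ob. round_R2 cr ob < R1} ob \<partial>D) = ennreal ((1 - good_prob) ^ j)"
    unfolding nn_integral_bad_round using good_prob_bounds by (simp add: ennreal_power)
  also have "ennreal (1 / ps) * ennreal ((1 - good_prob) ^ j) = ennreal (1 / ps * (1 - good_prob) ^ j)"
    by (rule ennreal_mult'[symmetric]) (use ps in simp)
  finally show ?thesis .
qed

lemma bad_prefix_eq:
  assumes "\<exists>m. R1 \<le> round_R2 cr (\<omega> m)"
  shows "bad_prefix j \<omega> = (if j \<le> first_good \<omega> then 1 else 0)"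
proof (cases "j \<le> first_good \<omega>")
  case True
  then have "\<not> R1 \<le> round_R2 cr (\<omega> i)" if "i < j" for i
    using that unfolding first_good_def by (metis not_less_Least order_less_le_trans)
  then show ?thesis using True unfolding bad_prefix_def by (auto intro!: prod.neutral simp: not_le)
next
  case False
  have "R1 \<le> round_R2 cr (\<omega> (first_good \<omega>))" unfolding first_good_def using assms by (rule LeastI_ex)
  with False show ?thesis unfolding bad_prefix_def
    by (auto intro!: prod_zero bexI[of _ "first_good \<omega>"])
qed

lemma AE_exists_good_round: "AE \<omega> in M. \<exists>m. R1 \<le> round_R2 cr (\<omega> m)"
proof -
  define E where "E = {\<omega> \<in> space M. \<not> (\<exists>m. R1 \<le> round_R2 cr (\<omega> m))}"
  have E[measurable]: "E \<in> sets M" unfolding E_def by measurable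
  have "emeasure M E \<le> ennreal ((1 - good_prob) ^ j)" for j
  proof -
    have "emeasure M E = (\<integral>\<^sup>+ \<omega>. indicator E \<omega> \<partial>M)" using E by simp
    also have "\<dots> \<le> (\<integral>\<^sup>+ \<omega>. bad_prefix j \<omega> \<partial>M)"
      by (intro nn_integral_mono) (auto simp: E_def bad_prefix_def not_le split: split_indicator)
    finally show ?thesis unfolding nn_integral_bad_prefix .
  qed
  moreover have "(\<lambda>j. ennreal ((1 - good_prob) ^ j)) \<longlonglongrightarrow> ennreal 0"
    using good_prob_bounds by (intro tendsto_ennrealI LIMSEQ_power_zero) simp
  ultimately have "emeasure M E \<le> ennreal 0"
    by (intro tendsto_le[OF trivial_limit_sequentially _ tendsto_const]) auto
  then show ?thesis
    using E by (intro AE_I'[of E]) (auto simp: E_def null_sets_def)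
qed

text \<open>Round \<open>j\<close> is reached (and its contention paid) iff rounds \<open>0, \<dots>, j - 1\<close> are all bad;
  round \<open>j + 1\<close> is reached (and a probe of round \<open>j\<close> paid without transmitting) iff rounds
  \<open>0, \<dots>, j\<close> are.\<close>

lemma total_time_probe_policy_series:
  assumes "\<exists>m. R1 \<le> round_R2 cr (\<omega> m)"
  shows "ennreal (total_time tau cr probe_policy \<omega>)
    = (\<Sum>j. ennreal tau * (ennreal (real (Kof \<omega> j)) * bad_prefix j \<omega>))
      + (\<Sum>j. ennreal tau * bad_prefix (Suc j) \<omega>) + 1"
proof -
  have "(\<Sum>j. ennreal tau * (ennreal (real (Kof \<omega> j)) * bad_prefix j \<omega>))
      = (\<Sum>j\<le>first_good \<omega>. ennreal (real (Kof \<omega> j) * tau))"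
    by (subst suminf_finite[of "{..first_good \<omega>}"])
       (auto intro!: sum.cong simp: bad_prefix_eq[OF assms] ennreal_mult'' mult.commute)
  also have "\<dots> = ennreal (\<Sum>j\<le>first_good \<omega>. real (Kof \<omega> j) * tau)"
    using tau by (intro sum_ennreal) simp
  finally have contention: "(\<Sum>j. ennreal tau * (ennreal (real (Kof \<omega> j)) * bad_prefix j \<omega>))
      = ennreal (\<Sum>j\<le>first_good \<omega>. real (Kof \<omega> j) * tau)" .
  have "(\<Sum>j. ennreal tau * bad_prefix (Suc j) \<omega>) = (\<Sum>j<first_good \<omega>. ennreal tau)"
    by (subst suminf_finite[of "{..<first_good \<omega>}"]) (auto simp: bad_prefix_eq[OF assms])
  also have "\<dots> = ennreal (tau * real (first_good \<omega>))"
    using tau by (simp add: ennreal_of_nat_eq_real_of_nat ennreal_mult'' mult.commute)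
  finally have probing: "(\<Sum>j. ennreal tau * bad_prefix (Suc j) \<omega>) = ennreal (tau * real (first_good \<omega>))" .
  show ?thesis
    unfolding contention probing total_time_probe_policy using tau
    by (simp add: ennreal_plus sum_nonneg)
qed

lemma nn_integral_total_time_probe_policy:
  "(\<integral>\<^sup>+ \<omega>. ennreal (total_time tau cr probe_policy \<omega>) \<partial>M)
     = ennreal ((1 - tau) + tau * (1 + 1 / ps) / good_prob)"
proof -
  have [measurable]: "(\<lambda>\<omega>. ennreal (real (Kof \<omega> j))) \<in> borel_measurable M" for j
    by measurable
  have "(\<integral>\<^sup>+ \<omega>. ennreal (total_time tau cr probe_policy \<omega>) \<partial>M)
      = (\<integral>\<^sup>+ \<omega>. (\<Sum>j. ennreal tau * (ennreal (real (Kof \<omega> j)) * bad_prefix j \<omega>))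
          + (\<Sum>j. ennreal tau * bad_prefix (Suc j) \<omega>) + 1 \<partial>M)"
    by (rule nn_integral_cong_AE, rule eventually_mono[OF AE_exists_good_round total_time_probe_policy_series])
  also have "\<dots> = (\<Sum>j. ennreal tau * ennreal (1 / ps * (1 - good_prob) ^ j))
      + (\<Sum>j. ennreal tau * ennreal ((1 - good_prob) ^ Suc j)) + 1"
    by (simp add: nn_integral_add nn_integral_suminf nn_integral_cmult nn_integral_Kof_bad_prefix
        nn_integral_bad_prefix M.emeasure_space_1 del: power_Suc)
  also have "\<dots> = (\<Sum>j. ennreal (tau / ps * (1 - good_prob) ^ j))
      + (\<Sum>j. ennreal (tau * (1 - good_prob) * (1 - good_prob) ^ j)) + 1"
    using tau ps by (simp add: ennreal_mult'[symmetric] mult.assoc)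
  also have "\<dots> = ennreal (tau / ps / good_prob) + ennreal (tau * (1 - good_prob) / good_prob) + 1"
    by (subst (1 2) suminf_ennreal_geometric) (use tau ps good_prob_bounds in simp_all)
  also have "\<dots> = ennreal (tau / ps / good_prob + tau * (1 - good_prob) / good_prob + 1)"
    using tau ps good_prob_bounds by simp
  also have "tau / ps / good_prob + tau * (1 - good_prob) / good_prob + 1
      = (1 - tau) + tau * (1 + 1 / ps) / good_prob"
    using ps good_prob_bounds by (simp add: field_simps)
  finally show ?thesis .
qed

lemma admissible_probe_policy: "admissible ps tau R1 m1 cr Re0 probe_policy"
  and integral_total_time_probe_policy:
    "(\<integral>\<omega>. total_time tau cr probe_policy \<omega> \<partial>M) = (1 - tau) + tau * (1 + 1 / ps) / good_prob"
proof -
  have "has_bochner_integral M (total_time tau cr probe_policy) ((1 - tau) + tau * (1 + 1 / ps) / good_prob)"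
    using tau ps good_prob_bounds total_time_ge_first_contention[of _ probe_policy]
    by (intro has_bochner_integral_nn_integral nn_integral_total_time_probe_policy)
       (auto intro!: AE_I2 add_nonneg_nonneg order.trans[OF _ total_time_ge_first_contention])
  then show "admissible ps tau R1 m1 cr Re0 probe_policy"
    and "(\<integral>\<omega>. total_time tau cr probe_policy \<omega> \<partial>M) = (1 - tau) + tau * (1 + 1 / ps) / good_prob"
    using AE_exists_good_round by (auto simp: admissible_def stops_probe_policy has_bochner_integral_iff)
qed

lemma integral_reward_probe_policy: "(\<integral>\<omega>. reward R1 tau cr probe_policy \<omega> \<partial>M) = R1 * (1 - tau)"
proof -
  have "AE \<omega> in M. reward R1 tau cr probe_policy \<omega> = R1 * (1 - tau)"
    using AE_exists_good_round
  proof eventually_elim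
    case (elim \<omega>)
    then have "R1 \<le> round_R2 cr (\<omega> (first_good \<omega>))" unfolding first_good_def by (rule LeastI_ex)
    then show ?case unfolding reward_probe_policy by simp
  qed
  then have "(\<integral>\<omega>. reward R1 tau cr probe_policy \<omega> \<partial>M) = (\<integral>\<omega>. R1 * (1 - tau) \<partial>M)"
    by (intro integral_cong_AE) auto
  then show ?thesis by (simp add: M.prob_space)
qed

lemma throughput_probe_policy_ge:
  "(1 - tau) * R1 / ((1 - tau) + tau * (1 + 1 / ps) * exp (R1 / (cr * m1 + Re0)))
     \<le> (\<integral>\<omega>. reward R1 tau cr probe_policy \<omega> \<partial>M) / (\<integral>\<omega>. total_time tau cr probe_policy \<omega> \<partial>M)"
proof -
  have "1 / good_prob \<le> 1 / exp (- R1 / (cr * m1 + Re0))"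
    using good_prob_ge good_prob_bounds by (intro divide_left_mono) auto
  also have "\<dots> = exp (R1 / (cr * m1 + Re0))" by (simp add: exp_minus field_simps)
  finally have "tau * (1 + 1 / ps) * (1 / good_prob) \<le> tau * (1 + 1 / ps) * exp (R1 / (cr * m1 + Re0))"
    using tau ps by (intro mult_left_mono) simp_all
  moreover have "0 < (1 - tau) + tau * (1 + 1 / ps) / good_prob"
    using tau ps good_prob_bounds by (simp add: add_pos_nonneg)
  ultimately show ?thesis
    unfolding integral_total_time_probe_policy integral_reward_probe_policy
    using tau R1 by (intro frac_le) (simp_all add: mult.commute)
qed

end

theorem lemma4:
  fixes ps tau R1 m1 cr Re0 :: real
  assumes "0 < ps" "ps < 1" "0 < tau" "tau < 1" "0 < R1" "0 < m1" "0 < cr" "0 < Re0"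
  shows "(1 - tau) * R1 / ((1 - tau) + tau * (1 + 1 / ps) * exp (R1 / (cr * m1 + Re0)))
           \<le> opt_throughput ps tau R1 m1 cr Re0
       \<and> opt_throughput ps tau R1 m1 cr Re0 \<le> R1 / (1 + tau / ps)"
proof -
  interpret limited_feedback ps tau R1 m1 cr Re0 by unfold_locales (use assms in auto)
  define S where "S = {(\<integral>\<omega>. reward R1 tau cr P \<omega> \<partial>M) / (\<integral>\<omega>. total_time tau cr P \<omega> \<partial>M)
    | P. admissible ps tau R1 m1 cr Re0 P}"
  have probe: "(\<integral>\<omega>. reward R1 tau cr probe_policy \<omega> \<partial>M) / (\<integral>\<omega>. total_time tau cr probe_policy \<omega> \<partial>M) \<in> S"
    unfolding S_def using admissible_probe_policy by blast
  have upper: "x \<le> R1 / (1 + tau / ps)" if "x \<in> S" for x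
    using that throughput_le unfolding S_def by blast
  then have "bdd_above S" by (rule bdd_aboveI)
  then have "(1 - tau) * R1 / ((1 - tau) + tau * (1 + 1 / ps) * exp (R1 / (cr * m1 + Re0))) \<le> Sup S"
    using throughput_probe_policy_ge cSup_upper[OF probe] by linarith
  moreover have "Sup S \<le> R1 / (1 + tau / ps)"
    using probe upper by (intro cSup_least) auto
  ultimately show ?thesis unfolding opt_throughput_def S_def by simp
qed

end
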